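(* There is an absolute constant $c>0$ such that the following holds. Let $r,r'>1$ be conjugate indices ($1/r+1/r'=1$), let $z\in\mathbb R^N$, and let $V\subset\mathbb R^N$ satisfy Structural Assumption A with $p=r'$ (for some integer $s_0\ge0$, admissible sequence $(V_s)$ with maps $\pi_s$, seminorms $\|\cdot\|_{[s]}$, $\|\cdot\|$, and integers $(j_s)_{s\ge s_0}$). Let $\varepsilon_1,\dots,\varepsilon_N$ be independent symmetric $\{-1,1\}$-valued random variables. Then for every $t\ge4$, with probability at least $1-2\exp(-ct^22^{s_0})$, for every $v\in V$, $$\left|\sum_{i=1}^N\varepsilon_iz_iv_i\right|\le2\|z\|_{\ell_2^N}\Lambda(V)+t\,\Theta(V)\,N^{1/2r'}\Big(\sum_{i\ge j_{s_0}}(z_i^* )^{2r}\Big)^{1/2r}.$$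
   Context: For $x\in\mathbb R^N$, $(x_i^* )_{i=1}^N$ is the nonincreasing rearrangement of $(|x_i|)_{i=1}^N$; empty sums are $0$. An admissible sequence of $V$ is a sequence of subsets $(V_s)_{s\ge0}$ with $|V_0|=1$, $|V_s|\le2^{2^s}$. Structural Assumption A (parameter $p\ge1$): $s_0\ge0$ is an integer, $(V_s)_{s\ge0}$ an admissible sequence of $V$, $\pi_s:V\to V_s$ maps, $\Delta_sv=\pi_{s+1}v-\pi_sv$, and for every $v\in V$, $v=\pi_{s_0}v+\sum_{s\ge s_0}\Delta_sv$ (convergent series). $(\|\cdot\|_{[s]})_{s\ge s_0}$ is a family of seminorms on $\mathbb R^N$ and $\|\cdot\|$ another seminorm on $\mathbb R^N$. $(j_s)_{s\ge s_0}$ is a nondecreasing sequence of integers with $1\le j_s\le N+1$. For every $s\ge s_0$ and $v\in V$: $\big(\sum_{i<j_s}((\Delta_sv)_i^* )^2\big)^{1/2}\le\|\Delta_sv\|_{[s]}$, $\big(\sum_{i\ge j_s}((\Delta_sv)_i^* )^{2p}\big)^{1/2p}\le\|\Delta_sv\|N^{1/2p}$, $\big(\sum_{i<j_s}((\pi_sv)_i^* )^2\big)^{1/2}\le\|\pi_sv\|_{[s]}$, $\big(\sum_{i\ge j_s}((\pi_sv)_i^* )^{2p}\big)^{1/2p}\le\|\pi_sv\|N^{1/2p}$. Set $\Lambda(V)=\sup_{v\in V}\big(\sum_{s\ge s_0}\|\Delta_sv\|_{[s]}+\|\pi_{s_0}v\|_{[s_0]}\big)$ and $\Theta(V)=\sup_{v\in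 V}\big(\sum_{s\ge s_0}2^{s/2}\|\Delta_sv\|+2^{s_0/2}\|\pi_{s_0}v\|\big)$. *)

theory Defs
  imports "HOL-Probability.Probability"
begin

text \<open>Vectors of R^N are represented as functions nat => real supported on {1..N}.\<close>

definition RN :: "nat \<Rightarrow> (nat \<Rightarrow> real) set" where
  "RN N = {x. \<forall>i. i \<notin> {1..N} \<longrightarrow> x i = 0}"

text \<open>Nonincreasing rearrangement of (|x_i|)_{i=1}^N, 1-indexed: xstar N x i for 1 <= i <= N.\<close>
definition xstar :: "nat \<Rightarrow> (nat \<Rightarrow> real) \<Rightarrow> nat \<Rightarrow> real" where
  "xstar N x i = rev (sort (map (\<lambda>k. \<bar>x k\<bar>) [1..<N+1])) ! (i - 1)"

definition head_l2 :: "nat \<Rightarrow> nat \<Rightarrow> (nat \<Rightarrow> real) \<Rightarrow> real" where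
  "head_l2 N j x = sqrt (\<Sum>i\<in>{1..<j}. (xstar N x i)^2)"

definition tail_lq :: "nat \<Rightarrow> real \<Rightarrow> nat \<Rightarrow> (nat \<Rightarrow> real) \<Rightarrow> real" where
  "tail_lq N q j x = (\<Sum>i\<in>{j..N}. (xstar N x i) powr q) powr (1 / q)"

definition l2norm :: "nat \<Rightarrow> (nat \<Rightarrow> real) \<Rightarrow> real" where
  "l2norm N x = sqrt (\<Sum>i\<in>{1..N}. (x i)^2)"

definition is_seminorm :: "nat \<Rightarrow> ((nat \<Rightarrow> real) \<Rightarrow> real) \<Rightarrow> bool" where
  "is_seminorm N f \<longleftrightarrow>
     (\<forall>x\<in>RN N. \<forall>y\<in>RN N. f (\<lambda>i. x i + y i) \<le> f x + f y) \<and>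
     (\<forall>x\<in>RN N. \<forall>a::real. f (\<lambda>i. a * x i) = \<bar>a\<bar> * f x)"

definition admissible :: "(nat \<Rightarrow> real) set \<Rightarrow> (nat \<Rightarrow> (nat \<Rightarrow> real) set) \<Rightarrow> bool" where
  "admissible V Vs \<longleftrightarrow> (\<forall>s. Vs s \<subseteq> V \<and> finite (Vs s) \<and> card (Vs s) \<le> 2 ^ (2 ^ s)) \<and> card (Vs 0) = 1"

definition Delta :: "(nat \<Rightarrow> (nat \<Rightarrow> real) \<Rightarrow> (nat \<Rightarrow> real)) \<Rightarrow> nat \<Rightarrow> (nat \<Rightarrow> real) \<Rightarrow> (nat \<Rightarrow> real)" where
  "Delta \<pi> s v = (\<lambda>i. \<pi> (Suc s) v i - \<pi> s v i)"

definition structA ::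
  "nat \<Rightarrow> real \<Rightarrow> (nat \<Rightarrow> real) set \<Rightarrow> nat \<Rightarrow> (nat \<Rightarrow> (nat \<Rightarrow> real) set)
   \<Rightarrow> (nat \<Rightarrow> (nat \<Rightarrow> real) \<Rightarrow> (nat \<Rightarrow> real))
   \<Rightarrow> (nat \<Rightarrow> (nat \<Rightarrow> real) \<Rightarrow> real) \<Rightarrow> ((nat \<Rightarrow> real) \<Rightarrow> real) \<Rightarrow> (nat \<Rightarrow> nat) \<Rightarrow> bool" where
  "structA N p V s0 Vs \<pi> nrm nrm0 j \<longleftrightarrow>
     p \<ge> 1 \<and> V \<subseteq> RN N \<and> admissible V Vs \<and>
     (\<forall>s. \<forall>v\<in>V. \<pi> s v \<in> Vs s) \<and>
     (\<forall>v\<in>V. \<forall>i. (\<lambda>k. Delta \<pi> (s0 + k) v i) sums (v i - \<pi> s0 v i)) \<and>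
     (\<forall>s\<ge>s0. is_seminorm N (nrm s)) \<and> is_seminorm N nrm0 \<and>
     (\<forall>s\<ge>s0. \<forall>s'\<ge>s. j s \<le> j s') \<and>
     (\<forall>s\<ge>s0. 1 \<le> j s \<and> j s \<le> N + 1) \<and>
     (\<forall>s\<ge>s0. \<forall>v\<in>V.
        head_l2 N (j s) (Delta \<pi> s v) \<le> nrm s (Delta \<pi> s v) \<and>
        tail_lq N (2 * p) (j s) (Delta \<pi> s v) \<le> nrm0 (Delta \<pi> s v) * real N powr (1 / (2 * p)) \<and>
        head_l2 N (j s) (\<pi> s v) \<le> nrm s (\<pi> s v) \<and>
        tail_lq N (2 * p) (j s) (\<pi> s v) \<le> nrm0 (\<pi> s v) * real N powr (1 / (2 * p)))"

text \<open>Lambda(V) and Theta(V), as extended reals (the supremum may be infinite).\<close>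
definition LambdaV ::
  "(nat \<Rightarrow> real) set \<Rightarrow> nat \<Rightarrow> (nat \<Rightarrow> (nat \<Rightarrow> real) \<Rightarrow> (nat \<Rightarrow> real))
   \<Rightarrow> (nat \<Rightarrow> (nat \<Rightarrow> real) \<Rightarrow> real) \<Rightarrow> ereal" where
  "LambdaV V s0 \<pi> nrm = (SUP v\<in>V. (\<Sum>k. ereal (nrm (s0 + k) (Delta \<pi> (s0 + k) v)))
                                     + ereal (nrm s0 (\<pi> s0 v)))"

definition ThetaV ::
  "(nat \<Rightarrow> real) set \<Rightarrow> nat \<Rightarrow> (nat \<Rightarrow> (nat \<Rightarrow> real) \<Rightarrow> (nat \<Rightarrow> real))
   \<Rightarrow> ((nat \<Rightarrow> real) \<Rightarrow> real) \<Rightarrow> ereal" where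
  "ThetaV V s0 \<pi> nrm0 = (SUP v\<in>V. (\<Sum>k. ereal (2 powr (real (s0 + k) / 2) * nrm0 (Delta \<pi> (s0 + k) v)))
                                     + ereal (2 powr (real s0 / 2) * nrm0 (\<pi> s0 v)))"

text \<open>Sign vectors: the law of N independent symmetric Rademacher variables is the uniform
  distribution on this finite set.\<close>
definition signs :: "nat \<Rightarrow> (nat \<Rightarrow> real) set" where
  "signs N = {e. (\<forall>i\<in>{1..N}. e i = 1 \<or> e i = -1) \<and> (\<forall>i. i \<notin> {1..N} \<longrightarrow> e i = 0)}"

definition rademacher :: "nat \<Rightarrow> (nat \<Rightarrow> real) measure" where
  "rademacher N = measure_pmf (pmf_of_set (signs N))"

end

theory Submission
  imports Defs
begin

text \<open>
  Write each link u of the chain (u = \<pi>_s0 v or u = \<Delta>_s v) as a sum over three sets of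
  coordinates: those of the j_s - 1 largest entries of |u|, those of the j_s0 - 1 largest entries
  of |z|, and the rest. On the first two sets Cauchy-Schwarz bounds the sum of e_i z_i u_i by
  2 ||z||_2 ||u||_[s]. On the rest, Hoeffding's inequality bounds it by t 2^(s/2) times its
  l2-norm except with probability 2 exp(-t^2 2^s / 2), and Hoelder's inequality with exponents
  r, r' bounds that norm by the tails of z and u. Summing along the chain gives the bound off an
  exceptional set. Level s has at most 2^(3 2^s) links, so for t \<ge> 4 the union bound costs
  2 exp(-t^2 2^s / 4) at level s, and these costs add up to at most 2 exp(-t^2 2^s0 / 8).
\<close>

section \<open>Tails of Rademacher sums\<close>

lemma signs_eq_PiE_dflt: "signs N = PiE_dflt {1..N} 0 (\<lambda>_. {-1, 1})"
  unfolding signs_def PiE_dflt_def by auto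

lemma rademacher_eq_Pi_pmf:
  "rademacher N = measure_pmf (Pi_pmf {1..N} 0 (\<lambda>_. pmf_of_set {-1, 1}))"
  unfolding rademacher_def signs_eq_PiE_dflt by (subst Pi_pmf_of_set) auto

lemma rademacher_coord_expectation:
  assumes "i \<in> {1..N}"
  shows "integral\<^sup>L (rademacher N) (\<lambda>e. e i) = 0"
proof -
  have "integral\<^sup>L (rademacher N) (\<lambda>e. e i)
        = measure_pmf.expectation (map_pmf (\<lambda>e. e i) (Pi_pmf {1..N} 0 (\<lambda>_. pmf_of_set {-1, 1}))) id"
    unfolding rademacher_eq_Pi_pmf by simp
  also have "\<dots> = 0"
    using assms by (subst Pi_pmf_component) (auto simp: integral_pmf_of_set)
  finally show ?thesis .
qed

lemma rademacher_indep_bounded: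
  assumes R: "R \<subseteq> {1..N}"
  shows "indep_interval_bounded_random_variables (rademacher N) R
           (\<lambda>i e. e i * a i) (\<lambda>i. - \<bar>a i\<bar>) (\<lambda>i. \<bar>a i\<bar>)"
proof -
  define p where "p = Pi_pmf {1..N} (0::real) (\<lambda>_. pmf_of_set {-1, 1})"
  show ?thesis
    unfolding rademacher_eq_Pi_pmf p_def[symmetric]
  proof unfold_locales
    show "finite R" using R by (rule finite_subset) simp
    have "prob_space.indep_vars (measure_pmf p) (\<lambda>_. count_space UNIV) (\<lambda>i e. e i) {1..N}"
      unfolding p_def by (rule indep_vars_Pi_pmf) simp
    then have "prob_space.indep_vars (measure_pmf p) (\<lambda>_. count_space UNIV) (\<lambda>i e. e i) R"
      using R by (rule prob_space.indep_vars_subset[OF prob_space_measure_pmf])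
    then show "prob_space.indep_vars (measure_pmf p) (\<lambda>_. borel) (\<lambda>i e. e i * a i) R"
      by (rule prob_space.indep_vars_compose2[OF prob_space_measure_pmf, where Y = "\<lambda>i x. x * a i"]) auto
    fix i assume i: "i \<in> R"
    have "set_pmf p \<subseteq> signs N"
      using set_Pi_pmf_subset'[of "{1..N}" 0 "\<lambda>_. pmf_of_set {-1, 1::real}"]
      unfolding p_def signs_eq_PiE_dflt by (simp add: o_def)
    then show "AE e in measure_pmf p. e i * a i \<in> {- \<bar>a i\<bar>..\<bar>a i\<bar>}"
      using i R by (intro AE_pmfI) (force simp: signs_def abs_mult)
  qed
qed

lemma measure_rademacher_signs: "measure (rademacher N) (signs N) = 1"
  unfolding rademacher_def signs_eq_PiE_dflt
  by (subst measure_pmf_of_set) (auto simp: card_gt_0_iff)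

definition large_deviation :: "nat set \<Rightarrow> real \<Rightarrow> (nat \<Rightarrow> real) \<Rightarrow> (nat \<Rightarrow> real) set" where
  "large_deviation R y a = {e. y * sqrt (\<Sum>i\<in>R. (a i)^2) < \<bar>\<Sum>i\<in>R. e i * a i\<bar>}"

lemma measure_large_deviation_le:
  assumes R: "R \<subseteq> {1..N}" and y: "y \<ge> 0"
  shows "measure (rademacher N) (large_deviation R y a) \<le> 2 * exp (- (y^2) / 2)"
proof (cases "(\<Sum>i\<in>R. (a i)^2) = 0")
  case True
  then have "\<forall>i\<in>R. a i = 0"
    using R by (subst (asm) sum_nonneg_eq_0_iff) (auto intro: finite_subset)
  then show ?thesis by (simp add: large_deviation_def)
next
  case False
  define S where "S = (\<Sum>i\<in>R. (a i)^2)"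
  have S: "S > 0"
    using False unfolding S_def by (metis less_eq_real_def sum_nonneg zero_le_power2)
  interpret Hoeffding_ineq "rademacher N" R "\<lambda>i e. e i * a i" "\<lambda>i. - \<bar>a i\<bar>" "\<lambda>i. \<bar>a i\<bar>" 0
  proof -
    show "Hoeffding_ineq (rademacher N) R (\<lambda>i e. e i * a i) (\<lambda>i. - \<bar>a i\<bar>) (\<lambda>i. \<bar>a i\<bar>)"
      unfolding Hoeffding_ineq_def using R by (rule rademacher_indep_bounded)
    have "integral\<^sup>L (rademacher N) (\<lambda>e. e i * a i) = 0" if "i \<in> R" for i
      using rademacher_coord_expectation[of i N] R that by auto
    then have "(\<Sum>i\<in>R. integral\<^sup>L (rademacher N) (\<lambda>e. e i * a i)) = 0"
      by (rule sum.neutral[OF ballI])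
    then show "0 \<equiv> \<Sum>i\<in>R. integral\<^sup>L (rademacher N) (\<lambda>e. e i * a i)"
      by (intro eq_reflection) simp
  qed
  have width: "(\<Sum>i\<in>R. (\<bar>a i\<bar> - - \<bar>a i\<bar>)^2) = 4 * S"
    unfolding S_def by (simp add: sum_distrib_left power_mult_distrib)
  have "measure (rademacher N) (large_deviation R y a)
        \<le> prob {e \<in> space (rademacher N). \<bar>(\<Sum>i\<in>R. e i * a i) - 0\<bar> \<ge> y * sqrt S}"
    unfolding large_deviation_def S_def rademacher_def
    by (intro measure_pmf.finite_measure_mono) auto
  also have "\<dots> \<le> 2 * exp (-2 * (y * sqrt S)^2 / (4 * S))"
    using Hoeffding_ineq_abs_ge[of "y * sqrt S"] S y unfolding width by simp
  also have "-2 * (y * sqrt S)^2 / (4 * S) = - (y^2) / 2"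
    using S by (simp add: power_mult_distrib)
  finally show ?thesis .
qed

section \<open>Largest coordinates\<close>

lemma xstar_permutation:
  obtains \<sigma> where "bij_betw \<sigma> {1..N} {1..N}"
    and "\<And>i. i \<in> {1..N} \<Longrightarrow> xstar N x i = \<bar>x (\<sigma> i)\<bar>"
    and "\<And>i k. 1 \<le> i \<Longrightarrow> i \<le> k \<Longrightarrow> k \<le> N \<Longrightarrow> xstar N x k \<le> xstar N x i"
proof -
  define L where "L = map (\<lambda>k. \<bar>x k\<bar>) [1..<N+1]"
  have len: "length L = N" unfolding L_def by simp
  have "mset (rev (sort L)) = mset L" by simp
  from mset_eq_permutation[OF this] obtain p
    where p: "p permutes {..<length L}" and pL: "permute_list p L = rev (sort L)" .
  have p_lt: "p m < N" if "m < N" for m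
    using permutes_in_image[OF p, of m] that len by simp
  define \<sigma> where "\<sigma> i = p (i - 1) + 1" for i
  have xstar_eq: "xstar N x i = \<bar>x (\<sigma> i)\<bar>" if "i \<in> {1..N}" for i
  proof -
    have "xstar N x i = rev (sort L) ! (i - 1)"
      unfolding xstar_def L_def by simp
    also have "\<dots> = L ! p (i - 1)"
      using permute_list_nth[OF p, of "i - 1"] that len by (auto simp: pL)
    also have "\<dots> = \<bar>x (\<sigma> i)\<bar>"
    proof -
      have "p (i - 1) < N" using that by (intro p_lt) auto
      then show ?thesis unfolding L_def \<sigma>_def by (simp del: upt_Suc add: add.commute)
    qed
    finally show ?thesis .
  qed
  have "inj_on \<sigma> {1..N}"
  proof (rule inj_onI)
    fix a b assume "a \<in> {1..N}" "b \<in> {1..N}" "\<sigma> a = \<sigma> b"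
    then show "a = b"
      using permutes_inj[OF p] unfolding \<sigma>_def by (auto simp: inj_eq)
  qed
  moreover have "\<sigma> ` {1..N} \<subseteq> {1..N}"
  proof
    fix k assume "k \<in> \<sigma> ` {1..N}"
    then obtain i where i: "i \<in> {1..N}" and k: "k = p (i - 1) + 1" unfolding \<sigma>_def by blast
    have "p (i - 1) < N" using i by (intro p_lt) auto
    then show "k \<in> {1..N}" unfolding k by simp
  qed
  ultimately have "bij_betw \<sigma> {1..N} {1..N}"
    unfolding bij_betw_def using endo_inj_surj by blast
  moreover have "xstar N x k \<le> xstar N x i" if "1 \<le> i" "i \<le> k" "k \<le> N" for i k
  proof -
    have "xstar N x k = sort L ! (N - k)"
      unfolding xstar_def L_def[symmetric] using that len by (simp add: rev_nth)
    also have "\<dots> \<le> sort L ! (N - i)"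
      by (rule sorted_nth_mono) (use that len in auto)
    also have "\<dots> = xstar N x i"
      unfolding xstar_def L_def[symmetric] using that len by (simp add: rev_nth)
    finally show ?thesis .
  qed
  ultimately show ?thesis
    using xstar_eq that by blast
qed

definition is_top_coords :: "nat \<Rightarrow> nat \<Rightarrow> (nat \<Rightarrow> real) \<Rightarrow> nat set \<Rightarrow> bool" where
  "is_top_coords N j x T \<longleftrightarrow> T \<subseteq> {1..N} \<and> card T = j - 1 \<and>
     sqrt (\<Sum>i\<in>T. (x i)^2) = head_l2 N j x \<and>
     (\<forall>q. (\<Sum>i\<in>{1..N} - T. \<bar>x i\<bar> powr q) powr (1 / q) = tail_lq N q j x) \<and>
     (\<forall>B \<subseteq> {1..N} - T. card B \<le> j - 1 \<longrightarrow> sqrt (\<Sum>i\<in>B. (x i)^2) \<le> head_l2 N j x)"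

lemma is_top_coords_exists:
  assumes j: "1 \<le> j" "j \<le> N + 1"
  shows "\<exists>T. is_top_coords N j x T"
proof -
  obtain \<sigma> where bij: "bij_betw \<sigma> {1..N} {1..N}"
    and xs: "\<And>i. i \<in> {1..N} \<Longrightarrow> xstar N x i = \<bar>x (\<sigma> i)\<bar>"
    and anti: "\<And>i k. 1 \<le> i \<Longrightarrow> i \<le> k \<Longrightarrow> k \<le> N \<Longrightarrow> xstar N x k \<le> xstar N x i"
    using xstar_permutation[of N x] by blast
  define T where "T = \<sigma> ` {1..<j}"
  have head: "{1..<j} \<subseteq> {1..N}" and tail: "{j..N} \<subseteq> {1..N}" using j by auto
  have inj: "inj_on \<sigma> {1..N}" using bij by (simp add: bij_betw_def)
  have compl: "{1..N} - T = \<sigma> ` {j..N}"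
  proof -
    have "{1..<j} \<union> {j..N} = {1..N}" "{1..<j} \<inter> {j..N} = {}" using j by auto
    then have "{1..N} = T \<union> \<sigma> ` {j..N}" "T \<inter> \<sigma> ` {j..N} = {}"
      using bij inj_on_image_Int[OF inj head tail] unfolding T_def
      by (metis bij_betw_def image_Un, simp)
    then show ?thesis by blast
  qed
  have sum_T: "(\<Sum>i\<in>T. f (\<bar>x i\<bar>)) = (\<Sum>i\<in>{1..<j}. f (xstar N x i))" for f
    unfolding T_def sum.reindex[OF inj_on_subset[OF inj head]] o_def
    using head by (intro sum.cong refl) (auto simp: xs)
  have sum_compl: "(\<Sum>i\<in>{1..N} - T. f (\<bar>x i\<bar>)) = (\<Sum>i\<in>{j..N}. f (xstar N x i))" for f
    unfolding compl sum.reindex[OF inj_on_subset[OF inj tail]] o_def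
    using tail by (intro sum.cong refl) (auto simp: xs)
  have extremal: "sqrt (\<Sum>i\<in>B. (x i)^2) \<le> head_l2 N j x"
    if B: "B \<subseteq> {1..N} - T" "card B \<le> j - 1" for B
  proof (cases "B = {}")
    case False
    then have jN: "j \<le> N" using B(1) compl by auto
    have xj: "0 \<le> xstar N x j" using xs[of j] j jN by simp
    have "(x b)^2 \<le> (xstar N x j)^2" if "b \<in> B" for b
    proof -
      obtain k where "k \<in> {j..N}" "b = \<sigma> k" using B(1) compl \<open>b \<in> B\<close> by auto
      then have "\<bar>x b\<bar> \<le> xstar N x j" using xs[of k] anti[of j k] j by auto
      then show ?thesis by (metis abs_ge_zero power2_abs power_mono)
    qed
    then have "(\<Sum>i\<in>B. (x i)^2) \<le> (\<Sum>i\<in>B. (xstar N x j)^2)"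
      by (rule sum_mono)
    also have "\<dots> \<le> (\<Sum>i\<in>{1..<j}. (xstar N x j)^2)"
      using B(2) by (simp add: mult_right_mono)
    also have "\<dots> \<le> (\<Sum>i\<in>{1..<j}. (xstar N x i)^2)"
      using anti jN xj by (intro sum_mono power_mono) auto
    finally show ?thesis unfolding head_l2_def by (rule real_sqrt_le_mono)
  qed (simp add: head_l2_def sum_nonneg)
  have "T \<subseteq> {1..N}" "card T = j - 1"
    unfolding T_def using bij head card_image[OF inj_on_subset[OF inj head]]
    by (auto simp: bij_betw_def)
  moreover have "sqrt (\<Sum>i\<in>T. (x i)^2) = head_l2 N j x"
    using sum_T[of "\<lambda>a. a^2"] unfolding head_l2_def by simp
  moreover have "(\<Sum>i\<in>{1..N} - T. \<bar>x i\<bar> powr q) powr (1 / q) = tail_lq N q j x" for q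
    using sum_compl[of "\<lambda>a. a powr q"] unfolding tail_lq_def by simp
  ultimately have "is_top_coords N j x T"
    unfolding is_top_coords_def using extremal by blast
  then show ?thesis ..
qed

definition top_coords :: "nat \<Rightarrow> nat \<Rightarrow> (nat \<Rightarrow> real) \<Rightarrow> nat set" where
  "top_coords N j x = (SOME T. is_top_coords N j x T)"

lemma is_top_coords_top_coords:
  "1 \<le> j \<Longrightarrow> j \<le> N + 1 \<Longrightarrow> is_top_coords N j x (top_coords N j x)"
  unfolding top_coords_def by (rule someI_ex) (rule is_top_coords_exists)

lemma is_top_coordsD:
  assumes "is_top_coords N j x T"
  shows "T \<subseteq> {1..N}" and "card T = j - 1" and "sqrt (\<Sum>i\<in>T. (x i)^2) = head_l2 N j x"
    and "(\<Sum>i\<in>{1..N} - T. \<bar>x i\<bar> powr q) powr (1 / q) = tail_lq N q j x"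
    and "B \<subseteq> {1..N} - T \<Longrightarrow> card B \<le> j - 1 \<Longrightarrow> sqrt (\<Sum>i\<in>B. (x i)^2) \<le> head_l2 N j x"
  using assms by (simp_all add: is_top_coords_def)

section \<open>Splitting a Rademacher sum into head and tail\<close>

lemma Holder_inequality_sum:
  fixes f g :: "'a \<Rightarrow> real"
  assumes "finite A" and pq: "p > 1" "q > 1" "1/p + 1/q = 1"
    and f: "\<And>i. i \<in> A \<Longrightarrow> f i \<ge> 0" and g: "\<And>i. i \<in> A \<Longrightarrow> g i \<ge> 0"
  shows "(\<Sum>i\<in>A. f i * g i) \<le> (\<Sum>i\<in>A. f i powr p) powr (1/p) * (\<Sum>i\<in>A. g i powr q) powr (1/q)"
proof -
  define F where "F = (\<Sum>i\<in>A. f i powr p) powr (1/p)"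
  define G where "G = (\<Sum>i\<in>A. g i powr q) powr (1/q)"
  have Fp: "F powr p = (\<Sum>i\<in>A. f i powr p)" and Gq: "G powr q = (\<Sum>i\<in>A. g i powr q)"
    unfolding F_def G_def using pq by (simp_all add: powr_powr sum_nonneg)
  show ?thesis unfolding F_def[symmetric] G_def[symmetric]
  proof (cases "F = 0 \<or> G = 0")
    case True
    then have "(\<forall>i\<in>A. f i = 0) \<or> (\<forall>i\<in>A. g i = 0)"
      using Fp Gq pq f g \<open>finite A\<close> by (auto simp: sum_nonneg_eq_0_iff)
    then show "(\<Sum>i\<in>A. f i * g i) \<le> F * G"
      by (auto simp: F_def G_def)
  next
    case False
    then have F: "F > 0" and G: "G > 0" by (simp_all add: F_def G_def)
    have "(\<Sum>i\<in>A. f i * g i) / (F * G) = (\<Sum>i\<in>A. (f i / F) * (g i / G))"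
      by (simp add: sum_divide_distrib)
    also have "\<dots> \<le> (\<Sum>i\<in>A. (f i / F) powr p / p + (g i / G) powr q / q)"
      by (intro sum_mono Youngs_inequality) (use pq f g F G in auto)
    also have "\<dots> = (\<Sum>i\<in>A. f i powr p) / F powr p / p + (\<Sum>i\<in>A. g i powr q) / G powr q / q"
      using f g F G
      by (simp add: sum.distrib powr_divide sum_divide_distrib[symmetric] less_imp_le cong: sum.cong)
    also have "\<dots> = 1"
      unfolding Fp[symmetric] Gq[symmetric] using F G pq by simp
    finally show "(\<Sum>i\<in>A. f i * g i) \<le> F * G" using F G by (simp add: divide_le_eq)
  qed
qed

lemma sqrt_sum_product_square_le_Holder:
  fixes z u :: "'a \<Rightarrow> real"
  assumes "finite R" and r: "r > 1" "r' > 1" "1/r + 1/r' = 1"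
  shows "sqrt (\<Sum>i\<in>R. (z i * u i)^2)
           \<le> (\<Sum>i\<in>R. \<bar>z i\<bar> powr (2*r)) powr (1/(2*r)) * (\<Sum>i\<in>R. \<bar>u i\<bar> powr (2*r')) powr (1/(2*r'))"
proof -
  have square_powr: "((w::real)^2) powr a = \<bar>w\<bar> powr (2*a)" for w a
  proof -
    have "w^2 = \<bar>w\<bar> powr 2" by simp
    then show ?thesis by (metis powr_powr)
  qed
  define Sz where "Sz = (\<Sum>i\<in>R. \<bar>z i\<bar> powr (2*r))"
  define Su where "Su = (\<Sum>i\<in>R. \<bar>u i\<bar> powr (2*r'))"
  have "(\<Sum>i\<in>R. (z i * u i)^2) = (\<Sum>i\<in>R. (z i)^2 * (u i)^2)"
    by (simp add: power_mult_distrib)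
  also have "\<dots> \<le> (\<Sum>i\<in>R. ((z i)^2) powr r) powr (1/r) * (\<Sum>i\<in>R. ((u i)^2) powr r') powr (1/r')"
    by (rule Holder_inequality_sum) (use assms in auto)
  also have "\<dots> = Sz powr (1/r) * Su powr (1/r')"
    unfolding Sz_def Su_def by (simp add: square_powr)
  finally have "sqrt (\<Sum>i\<in>R. (z i * u i)^2) \<le> sqrt (Sz powr (1/r)) * sqrt (Su powr (1/r'))"
    by (metis real_sqrt_le_mono real_sqrt_mult)
  also have "\<dots> = Sz powr (1/(2*r)) * Su powr (1/(2*r'))"
    by (simp add: Sz_def Su_def sum_nonneg powr_half_sqrt_powr[symmetric] mult.commute)
  finally show ?thesis unfolding Sz_def Su_def .
qed

lemma abs_signed_sum_le_l2norm:
  assumes "e \<in> signs N" and "S \<subseteq> {1..N}"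
  shows "\<bar>\<Sum>i\<in>S. e i * z i * u i\<bar> \<le> l2norm N z * sqrt (\<Sum>i\<in>S. (u i)^2)"
proof -
  have "(e i * z i)^2 = (z i)^2" if "i \<in> S" for i
  proof -
    have "e i = 1 \<or> e i = -1" using assms that unfolding signs_def by auto
    then show ?thesis by auto
  qed
  then have "(\<Sum>i\<in>S. (e i * z i) * u i)^2 \<le> (\<Sum>i\<in>S. (z i)^2) * (\<Sum>i\<in>S. (u i)^2)"
    using Cauchy_Schwarz_ineq_sum[of "\<lambda>i. e i * z i" u S] by simp
  then have "\<bar>\<Sum>i\<in>S. e i * z i * u i\<bar> \<le> sqrt (\<Sum>i\<in>S. (z i)^2) * sqrt (\<Sum>i\<in>S. (u i)^2)"
    by (metis real_sqrt_abs real_sqrt_le_mono real_sqrt_mult)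
  also have "\<dots> \<le> l2norm N z * sqrt (\<Sum>i\<in>S. (u i)^2)"
    unfolding l2norm_def using assms(2)
    by (intro mult_right_mono real_sqrt_le_mono sum_mono2) (auto intro: sum_nonneg)
  finally show ?thesis .
qed

definition tail_coords :: "nat \<Rightarrow> nat \<Rightarrow> nat \<Rightarrow> (nat \<Rightarrow> real) \<Rightarrow> (nat \<Rightarrow> real) \<Rightarrow> nat set" where
  "tail_coords N j0 j z u = {1..N} - top_coords N j u - top_coords N j0 z"

lemma abs_signed_sum_le_head_tail:
  assumes e: "e \<in> signs N" and j: "1 \<le> j0" "j0 \<le> j" "j \<le> N + 1"
  shows "\<bar>\<Sum>i\<in>{1..N}. e i * z i * u i\<bar>
           \<le> 2 * l2norm N z * head_l2 N j u + \<bar>\<Sum>i\<in>tail_coords N j0 j z u. e i * z i * u i\<bar>"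
proof -
  define A where "A = top_coords N j u"
  define I where "I = top_coords N j0 z"
  have A: "is_top_coords N j u A" and I: "is_top_coords N j0 z I"
    unfolding A_def I_def using j by (auto intro: is_top_coords_top_coords)
  have sub: "A \<subseteq> {1..N}" "I - A \<subseteq> {1..N}"
    using is_top_coordsD(1)[OF A] is_top_coordsD(1)[OF I] by auto
  have "card (I - A) \<le> card I"
    using finite_subset[OF is_top_coordsD(1)[OF I]] by (intro card_mono) auto
  then have "card (I - A) \<le> j - 1"
    using is_top_coordsD(2)[OF I] j by simp
  then have head_IA: "sqrt (\<Sum>i\<in>I - A. (u i)^2) \<le> head_l2 N j u"
    using sub(2) by (intro is_top_coordsD(5)[OF A]) auto
  let ?s = "\<lambda>S. \<Sum>i\<in>S. e i * z i * u i"
  have "?s {1..N} = ?s ({1..N} - A) + ?s A"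
    by (rule sum.subset_diff[OF sub(1)]) simp
  also have "?s ({1..N} - A) = ?s (({1..N} - A) - (I - A)) + ?s (I - A)"
    by (rule sum.subset_diff) (use sub in auto)
  also have "({1..N} - A) - (I - A) = tail_coords N j0 j z u"
    unfolding tail_coords_def A_def I_def by auto
  finally have "\<bar>?s {1..N}\<bar> \<le> \<bar>?s A\<bar> + \<bar>?s (I - A)\<bar> + \<bar>?s (tail_coords N j0 j z u)\<bar>"
    by linarith
  moreover have "\<bar>?s A\<bar> \<le> l2norm N z * head_l2 N j u"
    using abs_signed_sum_le_l2norm[OF e sub(1), of z u] is_top_coordsD(3)[OF A] by simp
  moreover have "\<bar>?s (I - A)\<bar> \<le> l2norm N z * head_l2 N j u"
    by (rule order_trans[OF abs_signed_sum_le_l2norm[OF e sub(2)] mult_left_mono[OF head_IA]])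
      (simp add: l2norm_def sum_nonneg)
  ultimately show ?thesis by linarith
qed

lemma sqrt_sum_tail_coords_le:
  assumes j: "1 \<le> j0" "j0 \<le> N + 1" "1 \<le> j" "j \<le> N + 1"
    and r: "r > 1" "r' > 1" "1/r + 1/r' = 1"
  shows "sqrt (\<Sum>i\<in>tail_coords N j0 j z u. (z i * u i)^2) \<le> tail_lq N (2*r) j0 z * tail_lq N (2*r') j u"
proof -
  define A where "A = top_coords N j u"
  define I where "I = top_coords N j0 z"
  have A: "is_top_coords N j u A" and I: "is_top_coords N j0 z I"
    unfolding A_def I_def using j by (auto intro: is_top_coords_top_coords)
  let ?R = "tail_coords N j0 j z u"
  have RI: "?R \<subseteq> {1..N} - I" and RA: "?R \<subseteq> {1..N} - A"
    unfolding tail_coords_def A_def I_def by auto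
  have "sqrt (\<Sum>i\<in>?R. (z i * u i)^2)
        \<le> (\<Sum>i\<in>?R. \<bar>z i\<bar> powr (2*r)) powr (1/(2*r)) * (\<Sum>i\<in>?R. \<bar>u i\<bar> powr (2*r')) powr (1/(2*r'))"
    by (rule sqrt_sum_product_square_le_Holder[OF _ r]) (simp add: tail_coords_def)
  also have "\<dots> \<le> (\<Sum>i\<in>{1..N} - I. \<bar>z i\<bar> powr (2*r)) powr (1/(2*r))
                 * (\<Sum>i\<in>{1..N} - A. \<bar>u i\<bar> powr (2*r')) powr (1/(2*r'))"
    using r by (intro mult_mono powr_mono2 sum_mono2 RI RA sum_nonneg) auto
  also have "\<dots> = tail_lq N (2*r) j0 z * tail_lq N (2*r') j u"
    using is_top_coordsD(4)[OF A] is_top_coordsD(4)[OF I] by simp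
  finally show ?thesis .
qed

lemma abs_signed_sum_le_link_bound:
  assumes e: "e \<in> signs N" and dev: "e \<notin> large_deviation (tail_coords N j0 j z u) y (\<lambda>i. z i * u i)"
    and j: "1 \<le> j0" "j0 \<le> j" "j \<le> N + 1" and r: "r > 1" "r' > 1" "1/r + 1/r' = 1"
    and y: "y \<ge> 0" and head: "head_l2 N j u \<le> A" and tail: "tail_lq N (2*r') j u \<le> B"
  shows "\<bar>\<Sum>i\<in>{1..N}. e i * z i * u i\<bar> \<le> 2 * l2norm N z * A + y * tail_lq N (2*r) j0 z * B"
proof -
  let ?R = "tail_coords N j0 j z u"
  have "\<bar>\<Sum>i\<in>?R. e i * z i * u i\<bar> \<le> y * sqrt (\<Sum>i\<in>?R. (z i * u i)^2)"
    using dev unfolding large_deviation_def by (simp add: mult.assoc not_less)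
  also have "\<dots> \<le> y * (tail_lq N (2*r) j0 z * tail_lq N (2*r') j u)"
    using j r y by (intro mult_left_mono sqrt_sum_tail_coords_le) auto
  also have "\<dots> \<le> y * (tail_lq N (2*r) j0 z * B)"
    using y tail by (intro mult_left_mono) (auto simp: tail_lq_def)
  finally have "\<bar>\<Sum>i\<in>?R. e i * z i * u i\<bar> \<le> y * tail_lq N (2*r) j0 z * B"
    by (simp add: mult.assoc)
  moreover have "2 * l2norm N z * head_l2 N j u \<le> 2 * l2norm N z * A"
    using head by (intro mult_left_mono) (auto simp: l2norm_def sum_nonneg)
  ultimately show ?thesis
    using abs_signed_sum_le_head_tail[OF e j, of z u] by linarith
qed

section \<open>Chaining\<close>

lemma is_seminorm_nonneg:
  assumes f: "is_seminorm N f" and x: "x \<in> RN N"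
  shows "0 \<le> f x"
proof -
  have triangle: "f (\<lambda>i. x i + y i) \<le> f x + f y" if "y \<in> RN N" for y
    using f x that unfolding is_seminorm_def by blast
  have scale: "f (\<lambda>i. a * x i) = \<bar>a\<bar> * f x" for a
    using f x unfolding is_seminorm_def by blast
  have "(\<lambda>i. (-1) * x i) \<in> RN N" using x by (simp add: RN_def)
  then have "f (\<lambda>i. x i + (-1) * x i) \<le> f x + f (\<lambda>i. (-1) * x i)"
    by (rule triangle)
  moreover have "(\<lambda>i. x i + (-1) * x i) = (\<lambda>i. 0 * x i)" by simp
  ultimately show ?thesis using scale[of 0] scale[of "-1"] by simp
qed
lemma ereal_abs_le_suminf_if_sums:
  fixes X c :: "nat \<Rightarrow> real"
  assumes S: "X sums S" and c: "\<And>k. \<bar>X k\<bar> \<le> c k"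
  shows "ereal \<bar>S\<bar> \<le> (\<Sum>k. ereal (c k))"
proof -
  have bound: "ereal \<bar>\<Sum>k<n. X k\<bar> \<le> (\<Sum>k. ereal (c k))" for n
  proof -
    have "\<bar>\<Sum>k<n. X k\<bar> \<le> (\<Sum>k<n. c k)" by (intro order_trans[OF sum_abs] sum_mono c)
    then have "ereal \<bar>\<Sum>k<n. X k\<bar> \<le> (\<Sum>k<n. ereal (c k))" by simp
    also have "\<dots> \<le> (\<Sum>k. ereal (c k))"
      using c by (intro suminf_upper) (meson abs_ge_zero ereal_less_eq(5) order_trans)
    finally show ?thesis .
  qed
  have "(\<lambda>n. ereal \<bar>\<Sum>k<n. X k\<bar>) \<longlonglongrightarrow> ereal \<bar>S\<bar>"
    using S unfolding sums_def by (intro tendsto_ereal tendsto_rabs)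
  then show ?thesis by (rule LIMSEQ_le_const2) (use bound in auto)
qed

lemma ereal_abs_sum_le_chaining:
  fixes X a b :: "nat \<Rightarrow> real"
  assumes S: "X sums S" and X: "\<And>k. \<bar>X k\<bar> \<le> Z * a k + W * b k" and X0: "\<bar>X0\<bar> \<le> Z * a0 + W * b0"
    and nonneg: "Z \<ge> 0" "W \<ge> 0" "\<And>k. a k \<ge> 0" "\<And>k. b k \<ge> 0" "a0 \<ge> 0" "b0 \<ge> 0"
  shows "ereal \<bar>X0 + S\<bar>
           \<le> ereal Z * ((\<Sum>k. ereal (a k)) + ereal a0) + ereal W * ((\<Sum>k. ereal (b k)) + ereal b0)"
proof -
  have sums_split: "(\<Sum>k. ereal (Z * a k + W * b k))
                    = ereal Z * (\<Sum>k. ereal (a k)) + ereal W * (\<Sum>k. ereal (b k))"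
    using nonneg
    by (simp add: suminf_add_ereal suminf_cmult_ereal flip: times_ereal.simps(1) plus_ereal.simps(1))
  have "ereal \<bar>X0 + S\<bar> \<le> ereal \<bar>X0\<bar> + ereal \<bar>S\<bar>"
    by (simp add: abs_triangle_ineq)
  also have "\<dots> \<le> ereal (Z * a0 + W * b0) + (\<Sum>k. ereal (Z * a k + W * b k))"
    using X0 ereal_abs_le_suminf_if_sums[OF S X] by (intro add_mono) auto
  also have "\<dots> = ereal (Z * a0 + W * b0) + (ereal Z * (\<Sum>k. ereal (a k)) + ereal W * (\<Sum>k. ereal (b k)))"
    by (simp only: sums_split)
  also have "ereal (Z * a0 + W * b0) = ereal Z * ereal a0 + ereal W * ereal b0"
    by simp
  also have "ereal Z * ereal a0 + ereal W * ereal b0 + (ereal Z * (\<Sum>k. ereal (a k)) + ereal W * (\<Sum>k. ereal (b k)))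
             = ereal Z * ((\<Sum>k. ereal (a k)) + ereal a0) + ereal W * ((\<Sum>k. ereal (b k)) + ereal b0)"
    using nonneg by (simp add: ereal_right_distrib suminf_0_le ac_simps del: times_ereal.simps)
  finally show ?thesis .
qed

lemma structAD:
  assumes "structA N p V s0 Vs \<pi> nrm nrm0 j"
  shows "V \<subseteq> RN N" and "admissible V Vs" and "\<forall>s. \<forall>v\<in>V. \<pi> s v \<in> Vs s"
    and "v \<in> V \<Longrightarrow> (\<lambda>k. Delta \<pi> (s0 + k) v i) sums (v i - \<pi> s0 v i)"
    and "s \<ge> s0 \<Longrightarrow> is_seminorm N (nrm s)" and "is_seminorm N nrm0"
    and "s0 \<le> s \<Longrightarrow> s \<le> s' \<Longrightarrow> j s \<le> j s'"
    and "s \<ge> s0 \<Longrightarrow> 1 \<le> j s" and "s \<ge> s0 \<Longrightarrow> j s \<le> N + 1"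
    and "s \<ge> s0 \<Longrightarrow> v \<in> V \<Longrightarrow> head_l2 N (j s) (Delta \<pi> s v) \<le> nrm s (Delta \<pi> s v)"
    and "s \<ge> s0 \<Longrightarrow> v \<in> V \<Longrightarrow>
           tail_lq N (2 * p) (j s) (Delta \<pi> s v) \<le> nrm0 (Delta \<pi> s v) * real N powr (1 / (2 * p))"
    and "s \<ge> s0 \<Longrightarrow> v \<in> V \<Longrightarrow> head_l2 N (j s) (\<pi> s v) \<le> nrm s (\<pi> s v)"
    and "s \<ge> s0 \<Longrightarrow> v \<in> V \<Longrightarrow>
           tail_lq N (2 * p) (j s) (\<pi> s v) \<le> nrm0 (\<pi> s v) * real N powr (1 / (2 * p))"
  using assms unfolding structA_def by simp_all

lemma structA_seminorms_nonneg:
  assumes SA: "structA N p V s0 Vs \<pi> nrm nrm0 j" and v: "v \<in> V"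
    and s: "s \<ge> s0" and u: "u \<in> {\<pi> s v, Delta \<pi> s v}"
  shows "0 \<le> nrm s u" and "0 \<le> nrm0 u"
proof -
  have proj: "\<pi> s' v \<in> RN N" for s'
    using structAD(1-3)[OF SA] v unfolding admissible_def by blast
  then have "u \<in> RN N"
    using u proj[of s] proj[of "Suc s"] unfolding RN_def Delta_def by auto
  then show "0 \<le> nrm s u" and "0 \<le> nrm0 u"
    using is_seminorm_nonneg structAD(5,6)[OF SA] s by blast+
qed

lemma abs_signed_sum_le_level_bound:
  assumes SA: "structA N r' V s0 Vs \<pi> nrm nrm0 j" and r: "r > 1" "r' > 1" "1/r + 1/r' = 1"
    and t: "t \<ge> 0" and e: "e \<in> signs N" and v: "v \<in> V"
    and s: "s \<ge> s0" and u: "u \<in> {\<pi> s v, Delta \<pi> s v}"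
    and dev: "e \<notin> large_deviation (tail_coords N (j s0) (j s) z u) (t * 2 powr (real s / 2)) (\<lambda>i. z i * u i)"
  shows "\<bar>\<Sum>i\<in>{1..N}. e i * z i * u i\<bar>
           \<le> 2 * l2norm N z * nrm s u
             + t * (real N powr (1 / (2 * r')) * tail_lq N (2 * r) (j s0) z) * (2 powr (real s / 2) * nrm0 u)"
proof -
  have "1 \<le> j s0" "j s0 \<le> j s" "j s \<le> N + 1"
    using structAD(7-9)[OF SA] s by auto
  moreover have "head_l2 N (j s) u \<le> nrm s u"
    and "tail_lq N (2 * r') (j s) u \<le> nrm0 u * real N powr (1 / (2 * r'))"
    using structAD(10-13)[OF SA s v] u by auto
  ultimately have "\<bar>\<Sum>i\<in>{1..N}. e i * z i * u i\<bar>
      \<le> 2 * l2norm N z * nrm s u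
        + t * 2 powr (real s / 2) * tail_lq N (2 * r) (j s0) z * (nrm0 u * real N powr (1 / (2 * r')))"
    using dev t by (intro abs_signed_sum_le_link_bound[OF e _ _ _ _ r]) auto
  then show ?thesis by (simp add: mult_ac)
qed

lemma ereal_abs_signed_sum_le_chaining:
  assumes SA: "structA N r' V s0 Vs \<pi> nrm nrm0 j" and r: "r > 1" "r' > 1" "1/r + 1/r' = 1"
    and t: "t \<ge> 0" and e: "e \<in> signs N" and v: "v \<in> V"
    and dev0: "e \<notin> large_deviation (tail_coords N (j s0) (j s0) z (\<pi> s0 v))
                 (t * 2 powr (real s0 / 2)) (\<lambda>i. z i * \<pi> s0 v i)"
    and dev: "\<And>s. s \<ge> s0 \<Longrightarrow> e \<notin> large_deviation (tail_coords N (j s0) (j s) z (Delta \<pi> s v))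
                 (t * 2 powr (real s / 2)) (\<lambda>i. z i * Delta \<pi> s v i)"
  shows "ereal \<bar>\<Sum>i\<in>{1..N}. e i * z i * v i\<bar>
           \<le> ereal (2 * l2norm N z) * LambdaV V s0 \<pi> nrm
             + ereal t * ThetaV V s0 \<pi> nrm0 * ereal (real N powr (1 / (2 * r')) * tail_lq N (2 * r) (j s0) z)"
proof -
  define W where "W = t * (real N powr (1 / (2 * r')) * tail_lq N (2 * r) (j s0) z)"
  define a where "a k = nrm (s0 + k) (Delta \<pi> (s0 + k) v)" for k
  define b where "b k = 2 powr (real (s0 + k) / 2) * nrm0 (Delta \<pi> (s0 + k) v)" for k
  have W: "W \<ge> 0" using t unfolding W_def tail_lq_def by simp
  have Z: "2 * l2norm N z \<ge> 0" unfolding l2norm_def by (simp add: sum_nonneg)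
  note nonneg = structA_seminorms_nonneg[OF SA v]
  have sums: "(\<lambda>k. \<Sum>i\<in>{1..N}. e i * z i * Delta \<pi> (s0 + k) v i)
                sums (\<Sum>i\<in>{1..N}. e i * z i * (v i - \<pi> s0 v i))"
    using structAD(4)[OF SA v] by (intro sums_sum sums_mult)
  have split: "(\<Sum>i\<in>{1..N}. e i * z i * v i)
      = (\<Sum>i\<in>{1..N}. e i * z i * \<pi> s0 v i) + (\<Sum>i\<in>{1..N}. e i * z i * (v i - \<pi> s0 v i))"
    by (simp add: algebra_simps flip: sum.distrib)
  have X: "\<bar>\<Sum>i\<in>{1..N}. e i * z i * Delta \<pi> (s0 + k) v i\<bar> \<le> 2 * l2norm N z * a k + W * b k" for k
    using abs_signed_sum_le_level_bound[OF SA r t e v, of "s0 + k"] dev[of "s0 + k"]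
    unfolding a_def b_def W_def by simp
  have X0: "\<bar>\<Sum>i\<in>{1..N}. e i * z i * \<pi> s0 v i\<bar>
            \<le> 2 * l2norm N z * nrm s0 (\<pi> s0 v) + W * (2 powr (real s0 / 2) * nrm0 (\<pi> s0 v))"
    using abs_signed_sum_le_level_bound[OF SA r t e v, of s0] dev0 unfolding W_def by simp
  have "a k \<ge> 0" "b k \<ge> 0" for k
    using nonneg[of "s0 + k" "Delta \<pi> (s0 + k) v"] unfolding a_def b_def by simp_all
  then have "ereal \<bar>\<Sum>i\<in>{1..N}. e i * z i * v i\<bar>
        \<le> ereal (2 * l2norm N z) * ((\<Sum>k. ereal (a k)) + ereal (nrm s0 (\<pi> s0 v)))
          + ereal W * ((\<Sum>k. ereal (b k)) + ereal (2 powr (real s0 / 2) * nrm0 (\<pi> s0 v)))"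
    unfolding split using nonneg[of s0 "\<pi> s0 v"]
    by (intro ereal_abs_sum_le_chaining[OF sums X X0 Z W]) auto
  also have "\<dots> \<le> ereal (2 * l2norm N z) * LambdaV V s0 \<pi> nrm + ereal W * ThetaV V s0 \<pi> nrm0"
    unfolding LambdaV_def ThetaV_def a_def b_def using Z W v
    by (intro add_mono ereal_mult_left_mono SUP_upper) auto
  also have "ereal W * ThetaV V s0 \<pi> nrm0
             = ereal t * ThetaV V s0 \<pi> nrm0 * ereal (real N powr (1 / (2 * r')) * tail_lq N (2 * r) (j s0) z)"
    unfolding W_def by (simp flip: times_ereal.simps(1) add: mult_ac)
  finally show ?thesis .
qed

section \<open>Union bounds over the levels of the chain\<close>

lemma card_image_proj_le:
  assumes "admissible V Vs" and "\<forall>s. \<forall>v\<in>V. \<pi> s v \<in> Vs s"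
  shows "finite (\<pi> s ` V)" and "card (\<pi> s ` V) \<le> 2 ^ 2 ^ s"
proof -
  have Vs: "finite (Vs s)" "card (Vs s) \<le> 2 ^ 2 ^ s"
    using assms(1) unfolding admissible_def by auto
  have "\<pi> s ` V \<subseteq> Vs s" using assms(2) by auto
  then show "finite (\<pi> s ` V)" and "card (\<pi> s ` V) \<le> 2 ^ 2 ^ s"
    using Vs card_mono[of "Vs s" "\<pi> s ` V"] finite_subset by auto
qed

lemma card_image_Delta_le:
  assumes "admissible V Vs" and "\<forall>s. \<forall>v\<in>V. \<pi> s v \<in> Vs s"
  shows "finite (Delta \<pi> s ` V)" and "card (Delta \<pi> s ` V) \<le> 2 ^ (3 * 2 ^ s)"
proof -
  let ?diff = "\<lambda>(a, b). \<lambda>i. b i - a i :: real"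
  have adm: "finite (Vs s') \<and> card (Vs s') \<le> 2 ^ 2 ^ s'" for s'
    using assms(1) unfolding admissible_def by blast
  note Vs = adm[of s] adm[of "Suc s"]
  have sub: "Delta \<pi> s ` V \<subseteq> ?diff ` (Vs s \<times> Vs (Suc s))"
    using assms(2) unfolding Delta_def by (auto intro!: image_eqI[where x = "(\<pi> s _, \<pi> (Suc s) _)"])
  have "finite (?diff ` (Vs s \<times> Vs (Suc s)))" using Vs by simp
  then show "finite (Delta \<pi> s ` V)" using sub by (rule finite_subset[rotated])
  have "card (Delta \<pi> s ` V) \<le> card (?diff ` (Vs s \<times> Vs (Suc s)))"
    using sub Vs by (intro card_mono) auto
  also have "\<dots> \<le> card (Vs s) * card (Vs (Suc s))"
    using card_image_le[of "Vs s \<times> Vs (Suc s)" ?diff] Vs by (simp add: card_cartesian_product)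
  also have "\<dots> \<le> 2 ^ 2 ^ s * 2 ^ 2 ^ Suc s" using Vs by (intro mult_le_mono) blast+
  also have "\<dots> = 2 ^ (3 * 2 ^ s)" by (simp flip: power_add)
  finally show "card (Delta \<pi> s ` V) \<le> 2 ^ (3 * 2 ^ s)" .
qed

lemma card_times_subgaussian_tail_le:
  fixes t m :: real
  assumes t: "t \<ge> 4" and m: "m \<le> 2 ^ (3 * 2 ^ s)"
  shows "m * (2 * exp (- (t^2 * 2^s / 2))) \<le> 2 * exp (- (t^2 * 2^s / 4))"
proof -
  define X :: real where "X = 2 ^ s"
  have "(2::real) ^ (3 * 2 ^ s) \<le> exp 1 ^ (3 * 2 ^ s)"
    using exp_ge_add_one_self[of 1] by (intro power_mono) auto
  also have "\<dots> = exp (3 * X)"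
    unfolding X_def by (simp flip: exp_of_nat_mult)
  finally have mX: "m \<le> exp (3 * X)" using m by linarith
  have "16 * X \<le> t^2 * X"
    using mult_mono[of 4 t 4 t] t unfolding X_def by (intro mult_right_mono) (auto simp: power2_eq_square)
  moreover have "X \<ge> 0" unfolding X_def by simp
  ultimately have exponent: "3 * X + - (t^2 * X / 2) \<le> - (t^2 * X / 4)" by linarith
  have "m * (2 * exp (- (t^2 * X / 2))) \<le> exp (3 * X) * (2 * exp (- (t^2 * X / 2)))"
    using mX by (intro mult_right_mono) auto
  also have "\<dots> = 2 * exp (3 * X + - (t^2 * X / 2))" by (simp add: mult_exp_exp)
  also have "\<dots> \<le> 2 * exp (- (t^2 * X / 4))" using exponent by simp
  finally show ?thesis unfolding X_def .
qed

lemma exp_doubling_le_geometric: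
  fixes a :: real
  assumes "a \<ge> 4"
  shows "exp (- (a * 2^k)) \<le> exp (- a) * (1/2)^k"
proof -
  have k: "real k + 1 \<le> 2^k"
    using less_exp[of k] by (metis Suc_le_eq of_nat_Suc of_nat_le_iff of_nat_numeral of_nat_power add.commute)
  then have "4 * (2^k - 1) \<le> a * (2^k - 1)"
    using assms by (intro mult_right_mono) auto
  then have "a + real k \<le> a * 2^k" using k by (simp add: algebra_simps)
  then have "exp (- (a * 2^k)) \<le> exp (- a) * exp (- real k)"
    by (simp add: mult_exp_exp)
  also have "exp (- real k) = exp (-1) ^ k"
    using exp_of_nat_mult[of k "-1"] by simp
  also have "\<dots> \<le> (1/2)^k"
  proof (rule power_mono)
    have "2 \<le> exp (1::real)" using exp_ge_add_one_self[of 1] by simp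
    then show "exp (-1) \<le> (1/2::real)" by (simp add: exp_minus field_simps)
  qed simp
  finally show ?thesis by simp
qed

lemma measure_UN_le_subgaussian_level:
  fixes p :: "'a pmf"
  assumes "finite U" and "card U \<le> 2 ^ (3 * 2 ^ s)" and "t \<ge> 4"
    and B: "\<And>u. u \<in> U \<Longrightarrow> measure p (B u) \<le> 2 * exp (- (t^2 * 2^s / 2))"
  shows "measure p (\<Union>u\<in>U. B u) \<le> 2 * exp (- (t^2 * 2^s / 4))"
proof -
  have "measure p (\<Union>u\<in>U. B u) \<le> (\<Sum>u\<in>U. measure p (B u))"
    using assms(1) by (rule measure_pmf.finite_measure_subadditive_finite) simp
  also have "\<dots> \<le> (\<Sum>u\<in>U. 2 * exp (- (t^2 * 2^s / 2)))"
    using B by (rule sum_mono)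
  also have "\<dots> = real (card U) * (2 * exp (- (t^2 * 2^s / 2)))"
    by simp
  also have "\<dots> \<le> 2 * exp (- (t^2 * 2^s / 4))"
  proof (rule card_times_subgaussian_tail_le[OF assms(3)])
    have "real (card U) \<le> real (2 ^ (3 * 2 ^ s))"
      using assms(2) by (simp only: of_nat_le_iff)
    then show "real (card U) \<le> 2 ^ (3 * 2 ^ s)" by simp
  qed
  finally show ?thesis .
qed

lemma measure_UN_le_subgaussian_levels:
  fixes p :: "'a pmf"
  assumes t: "t \<ge> 4" and U: "\<And>k. finite (U k)" "\<And>k. card (U k) \<le> 2 ^ (3 * 2 ^ (s0 + k))"
    and B: "\<And>k u. u \<in> U k \<Longrightarrow> measure p (B k u) \<le> 2 * exp (- (t^2 * 2^(s0 + k) / 2))"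
  shows "measure p (\<Union>k. \<Union>u\<in>U k. B k u) \<le> 4 * exp (- (t^2 * 2^s0 / 4))"
proof -
  define a where "a = t^2 * 2^s0 / 4"
  have "16 \<le> t^2" using mult_mono[of 4 t 4 t] t by (simp add: power2_eq_square)
  then have "a \<ge> 4" unfolding a_def using mult_mono[of 16 "t^2" 1 "2^s0"] by simp
  have "measure p (\<Union>u\<in>U k. B k u) \<le> 2 * exp (- (a * 2^k))" for k
    using U t B by (intro order_trans[OF measure_UN_le_subgaussian_level[where s = "s0 + k"]])
      (auto simp: a_def power_add mult_ac)
  moreover have "2 * exp (- (a * 2^k)) \<le> 2 * exp (- a) * (1/2)^k" for k
    using exp_doubling_le_geometric[OF \<open>a \<ge> 4\<close>, of k] by (simp add: mult.assoc)
  ultimately have geom: "measure p (\<Union>u\<in>U k. B k u) \<le> 2 * exp (- a) * (1/2)^k" for k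
    using order_trans by blast
  have summable: "summable (\<lambda>k. 2 * exp (- a) * (1/2::real)^k)"
    by (intro summable_mult summable_geometric) simp
  have summable_B: "summable (\<lambda>k. measure p (\<Union>u\<in>U k. B k u))"
    by (rule summable_comparison_test'[OF summable]) (simp add: geom)
  have "measure p (\<Union>k. \<Union>u\<in>U k. B k u) \<le> (\<Sum>k. measure p (\<Union>u\<in>U k. B k u))"
    using summable_B by (intro measure_pmf.finite_measure_subadditive_countably) auto
  also have "\<dots> \<le> (\<Sum>k. 2 * exp (- a) * (1/2::real)^k)"
    by (rule suminf_le[OF geom summable_B summable])
  also have "\<dots> = 4 * exp (- a)"
    using suminf_mult[OF summable_geometric[of "1/2::real"], of "2 * exp (- a)"]
      suminf_geometric[of "1/2::real"] by simp
  finally show ?thesis unfolding a_def .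
qed

lemma measure_level_deviation_le:
  assumes "R \<subseteq> {1..N}" and "t \<ge> 0"
  shows "measure (rademacher N) (large_deviation R (t * 2 powr (real s / 2)) a)
           \<le> 2 * exp (- (t^2 * 2^s / 2))"
proof -
  have "(2 powr (real s / 2))^2 = (2::real) ^ s"
    by (simp add: power2_eq_square powr_realpow flip: powr_add)
  then show ?thesis
    using measure_large_deviation_le[OF assms(1), of "t * 2 powr (real s / 2)" a] assms(2)
    by (simp add: power_mult_distrib)
qed

lemma six_exp_le_two_exp_half:
  fixes a :: real
  assumes "a \<ge> 4"
  shows "6 * exp (- a) \<le> 2 * exp (- (a / 2))"
proof -
  have "3 \<le> exp (a / 2)" using exp_ge_add_one_self[of "a / 2"] assms by linarith
  then have "6 * exp (- (a / 2)) * exp (- (a / 2)) \<le> 2 * exp (a / 2) * exp (- (a / 2)) * exp (- (a / 2))"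
    by (intro mult_right_mono) auto
  moreover have "exp (a / 2) * exp (- (a / 2)) = 1" by (simp flip: exp_add)
  moreover have "exp (- (a / 2)) * exp (- (a / 2)) = exp (- a)" by (simp flip: exp_add)
  ultimately show ?thesis by (simp add: mult.assoc)
qed

lemma rademacher_chaining_bound:
  assumes r: "r > 1" "r' > 1" "1/r + 1/r' = 1" and SA: "structA N r' V s0 Vs \<pi> nrm nrm0 j"
    and t: "t \<ge> 4"
  shows "measure (rademacher N)
           {e \<in> signs N. \<forall>v\<in>V. ereal \<bar>\<Sum>i\<in>{1..N}. e i * z i * v i\<bar>
              \<le> ereal (2 * l2norm N z) * LambdaV V s0 \<pi> nrm + ereal t * ThetaV V s0 \<pi> nrm0
                 * ereal (real N powr (1 / (2 * r')) * tail_lq N (2 * r) (j s0) z)}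
         \<ge> 1 - 2 * exp (- (1/8) * t^2 * 2 ^ s0)" (is "measure _ ?E \<ge> _")
proof -
  define dev where "dev s u = large_deviation (tail_coords N (j s0) (j s) z u)
                                (t * 2 powr (real s / 2)) (\<lambda>i. z i * u i)" for s u
  define Bad where "Bad = (\<Union>u\<in>\<pi> s0 ` V. dev s0 u) \<union> (\<Union>k. \<Union>u\<in>Delta \<pi> (s0 + k) ` V. dev (s0 + k) u)"
  define a where "a = t^2 * 2^s0 / 4"
  have "16 * 1 \<le> t^2 * 2^s0" using mult_mono[of 4 t 4 t] t by (intro mult_mono) (auto simp: power2_eq_square)
  then have a: "a \<ge> 4" unfolding a_def by simp
  have dev_le: "measure (rademacher N) (dev s u) \<le> 2 * exp (- (t^2 * 2^s / 2))" for s u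
    unfolding dev_def using t by (intro measure_level_deviation_le) (auto simp: tail_coords_def)
  have adm: "admissible V Vs" "\<forall>s. \<forall>v\<in>V. \<pi> s v \<in> Vs s"
    using structAD(2,3)[OF SA] .
  have "card (\<pi> s0 ` V) \<le> 2 ^ (3 * 2 ^ s0)"
    using card_image_proj_le(2)[OF adm, of s0] power_increasing[of "2 ^ s0" "3 * 2 ^ s0" "2::nat"]
    by linarith
  then have "measure (rademacher N) (\<Union>u\<in>\<pi> s0 ` V. dev s0 u) \<le> 2 * exp (- a)"
    unfolding a_def rademacher_def using card_image_proj_le(1)[OF adm] t dev_le
    by (intro measure_UN_le_subgaussian_level) (auto simp: rademacher_def)
  moreover have "measure (rademacher N) (\<Union>k. \<Union>u\<in>Delta \<pi> (s0 + k) ` V. dev (s0 + k) u) \<le> 4 * exp (- a)"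
    unfolding a_def rademacher_def using card_image_Delta_le[OF adm] t dev_le
    by (intro measure_UN_le_subgaussian_levels) (auto simp: rademacher_def)
  moreover have "measure (rademacher N) Bad
      \<le> measure (rademacher N) (\<Union>u\<in>\<pi> s0 ` V. dev s0 u)
        + measure (rademacher N) (\<Union>k. \<Union>u\<in>Delta \<pi> (s0 + k) ` V. dev (s0 + k) u)"
    unfolding Bad_def by (rule measure_Un_le) (simp_all add: rademacher_def)
  ultimately have "measure (rademacher N) Bad \<le> 2 * exp (- (a / 2))"
    using six_exp_le_two_exp_half[OF a] by linarith
  moreover have "signs N - Bad \<subseteq> ?E"
  proof
    fix e assume e: "e \<in> signs N - Bad"
    then have "e \<notin> dev s (Delta \<pi> s v)" if "s \<ge> s0" "v \<in> V" for s v
      using that unfolding Bad_def by (auto dest!: spec[of _ "s - s0"])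
    with e show "e \<in> ?E"
      using t ereal_abs_signed_sum_le_chaining[OF SA r] unfolding Bad_def dev_def by auto
  qed
  then have "measure (rademacher N) (signs N) \<le> measure (rademacher N) ?E + measure (rademacher N) Bad"
    unfolding rademacher_def
    by (intro order_trans[OF measure_pmf.finite_measure_mono measure_Un_le]) auto
  ultimately show ?thesis
    unfolding measure_rademacher_signs a_def by (simp add: mult_ac)
qed

theorem mainTheorem5:
  shows "\<exists>c::real. c > 0 \<and>
    (\<forall>(N::nat) (r::real) (r'::real) (z::nat \<Rightarrow> real) (V::(nat \<Rightarrow> real) set) (s0::nat)
       (Vs::nat \<Rightarrow> (nat \<Rightarrow> real) set) (\<pi>::nat \<Rightarrow> (nat \<Rightarrow> real) \<Rightarrow> (nat \<Rightarrow> real))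
       (nrm::nat \<Rightarrow> (nat \<Rightarrow> real) \<Rightarrow> real) (nrm0::(nat \<Rightarrow> real) \<Rightarrow> real) (j::nat \<Rightarrow> nat) (t::real).
       r > 1 \<and> r' > 1 \<and> 1 / r + 1 / r' = 1 \<and> z \<in> RN N \<and>
       structA N r' V s0 Vs \<pi> nrm nrm0 j \<and> t \<ge> 4 \<longrightarrow>
       measure (rademacher N)
         {e \<in> signs N. \<forall>v\<in>V.
            ereal \<bar>\<Sum>i\<in>{1..N}. e i * z i * v i\<bar>
              \<le> ereal (2 * l2norm N z) * LambdaV V s0 \<pi> nrm
                + ereal t * ThetaV V s0 \<pi> nrm0
                  * ereal (real N powr (1 / (2 * r')) * tail_lq N (2 * r) (j s0) z)}
       \<ge> 1 - 2 * exp (- c * t^2 * 2 ^ s0))"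
  using rademacher_chaining_bound by (intro exI[of _ "1/8"]) auto

end
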